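(* For $a\in\mathbb{R}$, let $f_a$ be the solution of the radial Loewner PDE $$\frac{\partial f}{\partial t}(z,t)=-z f'(z,t)\,\frac{e^{iat}+z}{e^{iat}-z},\qquad f(z,0)=z,\quad (z,t)\in\mathbb{D}\times[0,\infty).$$ Then for every $t\ge0$, $f_a(\cdot,t)\to h(\cdot,t)$ locally uniformly in $\mathbb{D}$ as $a\to\infty$, where $h(z,t)=ze^{-t}$.
   Context: $\mathbb{D}$ is the unit disc and $f'=\partial f/\partial z$. *)

theory Defs
  imports "HOL-Complex_Analysis.Complex_Analysis"
begin

text \<open>f is a solution of the radial Loewner PDE with driving point exp(i a t):
  df/dt (z,t) = - z f'(z,t) (e^{iat}+z)/(e^{iat}-z), f(z,0) = z, on D x [0,oo).
  Regularity: f jointly continuous, holomorphic in z for each t, differentiable in t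
  (one-sided at t = 0). This makes the solution unique.\<close>
definition loewner_sol :: "real \<Rightarrow> (complex \<Rightarrow> real \<Rightarrow> complex) \<Rightarrow> bool" where
  "loewner_sol a f \<longleftrightarrow>
     continuous_on (ball 0 1 \<times> {0..}) (\<lambda>(z,t). f z t) \<and>
     (\<forall>t\<ge>0. (\<lambda>z. f z t) holomorphic_on ball 0 1) \<and>
     (\<forall>z\<in>ball 0 1. f z 0 = z) \<and>
     (\<forall>z\<in>ball 0 1. \<forall>t\<ge>0.
        ((\<lambda>s. f z s) has_vector_derivative
           (- z * deriv (\<lambda>w. f w t) z *
              ((exp (\<i> * of_real (a * t)) + z) / (exp (\<i> * of_real (a * t)) - z))))
        (at t within {0..}))"

end

theory Submission
  imports Defs
begin

text \<open>Let \<open>v \<sigma> = z * exp (\<sigma> - t)\<close> be the radial flow reaching \<open>z\<close> at time \<open>t\<close>, and let \<open>W\<close>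
  be \<open>v\<close> corrected to first order by the rapidly oscillating part of the Loewner kernel. Along
  \<open>W\<close> the PDE makes \<open>s \<mapsto> f (W s) s\<close> nearly constant, its derivative being a multiple of
  \<open>W - v = O(1/a)\<close>. Hence \<open>f z t \<approx> f (W t) t \<approx> W 0 \<approx> z * exp (- t)\<close> up to \<open>O(1/a)\<close>, uniformly
  for \<open>norm z \<le> r < 1\<close>. The bounds this needs, \<open>norm (f z t) \<le> norm z\<close> and a Cauchy estimate
  for \<open>f'\<close>, come from a maximum principle for \<open>norm (f z t)\<^sup>2\<close> along the flow.\<close>

section \<open>Holomorphic functions depending on a real parameter\<close>

lemma norm_deriv_le_Cauchy:
  assumes "F holomorphic_on S" "cball \<zeta> \<rho> \<subseteq> S" "0 < \<rho>"
    and "\<And>w. w \<in> cball \<zeta> \<rho> \<Longrightarrow> norm (F w) \<le> M"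
  shows "norm (deriv F \<zeta>) \<le> M / \<rho>"
proof -
  have "norm ((deriv ^^ 1) F \<zeta>) \<le> fact 1 * M / \<rho> ^ 1"
  proof (rule Cauchy_inequality)
    show "F holomorphic_on ball \<zeta> \<rho>"
      using assms(1,2) ball_subset_cball holomorphic_on_subset by blast
    show "continuous_on (cball \<zeta> \<rho>) F"
      using assms(1,2) holomorphic_on_imp_continuous_on continuous_on_subset by blast
    show "norm (F w) \<le> M" if "norm (\<zeta> - w) = \<rho>" for w
      using that assms(4) by (simp add: dist_norm)
  qed (fact assms(3))
  then show ?thesis by simp
qed

lemma dist_deriv_le_Cauchy:
  assumes "F holomorphic_on S" "G holomorphic_on S" "open S" "cball \<zeta> \<rho> \<subseteq> S" "0 < \<rho>"
    and "\<And>w. w \<in> cball \<zeta> \<rho> \<Longrightarrow> dist (F w) (G w) \<le> M"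
  shows "dist (deriv F \<zeta>) (deriv G \<zeta>) \<le> M / \<rho>"
proof -
  have "\<zeta> \<in> S" using assms(4,5) by auto
  then have "deriv (\<lambda>w. F w - G w) \<zeta> = deriv F \<zeta> - deriv G \<zeta>"
    using assms(1-3) by (intro deriv_diff holomorphic_on_imp_differentiable_at[of _ S])
  moreover have "norm (deriv (\<lambda>w. F w - G w) \<zeta>) \<le> M / \<rho>"
    using assms(1,2,4-6) by (intro norm_deriv_le_Cauchy[of _ S]) (auto intro: holomorphic_intros simp: dist_norm)
  ultimately show ?thesis by (simp add: dist_norm)
qed

lemma uniformly_close_in_param:
  fixes f :: "'a::metric_space \<Rightarrow> real \<Rightarrow> 'b::metric_space"
  assumes "compact C" "closed T" "continuous_on (C \<times> T) (\<lambda>(z,t). f z t)" "t0 \<in> T" "e > 0"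
  obtains \<eta> where "\<eta> > 0" "\<And>z t. z \<in> C \<Longrightarrow> t \<in> T \<Longrightarrow> dist t t0 < \<eta> \<Longrightarrow> dist (f z t) (f z t0) < e"
proof -
  define K where "K = C \<times> (T \<inter> cball t0 1)"
  have "compact K" unfolding K_def using assms(1,2) by (intro compact_Times closed_Int_compact) auto
  moreover have "continuous_on K (\<lambda>(z,t). f z t)"
    by (rule continuous_on_subset[OF assms(3)]) (auto simp: K_def)
  ultimately have "uniformly_continuous_on K (\<lambda>(z,t). f z t)"
    by (intro compact_uniformly_continuous)
  then obtain \<eta> where "\<eta> > 0" and close: "\<forall>y\<in>K. \<forall>y'\<in>K. dist y' y < \<eta> \<longrightarrow>
      dist ((\<lambda>(z,t). f z t) y') ((\<lambda>(z,t). f z t) y) < e"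
    using assms(5) unfolding uniformly_continuous_on_def by blast
  show thesis
  proof (rule that[of "min \<eta> 1"])
    fix z t assume "z \<in> C" "t \<in> T" "dist t t0 < min \<eta> 1"
    then show "dist (f z t) (f z t0) < e"
      using close assms(4) by (auto simp: K_def dist_Pair_Pair dist_commute)
  qed (use \<open>\<eta> > 0\<close> in simp)
qed

lemma continuous_on_deriv_param:
  fixes f :: "complex \<Rightarrow> real \<Rightarrow> complex"
  assumes "open S" "closed T"
    and cont: "continuous_on (S \<times> T) (\<lambda>(z,t). f z t)"
    and hol: "\<And>t. t \<in> T \<Longrightarrow> (\<lambda>z. f z t) holomorphic_on S"
  shows "continuous_on (S \<times> T) (\<lambda>(z,t). deriv (\<lambda>w. f w t) z)"
  unfolding continuous_on_iff
proof (intro ballI allI impI)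
  fix x :: "complex \<times> real" and e :: real
  assume "x \<in> S \<times> T" and e: "e > 0"
  then obtain z0 t0 where x_eq: "x = (z0, t0)" and z0: "z0 \<in> S" and t0: "t0 \<in> T" by auto
  obtain \<rho> where \<rho>: "\<rho> > 0" and cball_S: "cball z0 (2 * \<rho>) \<subseteq> S"
  proof -
    obtain \<epsilon> where "\<epsilon> > 0" "cball z0 \<epsilon> \<subseteq> S"
      using open_contains_cball z0 \<open>open S\<close> by blast
    then show thesis by (intro that[of "\<epsilon> / 2"]) auto
  qed
  have "continuous_on (cball z0 (2 * \<rho>) \<times> T) (\<lambda>(z,t). f z t)"
    by (rule continuous_on_subset[OF cont]) (use cball_S in auto)
  moreover have "e * \<rho> / 2 > 0" using e \<rho> by simp
  ultimately obtain \<eta> where \<eta>: "\<eta> > 0" and f_close: "\<And>w t. w \<in> cball z0 (2 * \<rho>) \<Longrightarrow> t \<in> T \<Longrightarrow>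
      dist t t0 < \<eta> \<Longrightarrow> dist (f w t) (f w t0) < e * \<rho> / 2"
    using uniformly_close_in_param[OF compact_cball \<open>closed T\<close> _ t0] by blast
  have "continuous_on S (deriv (\<lambda>w. f w t0))"
    using holomorphic_deriv[OF hol[OF t0] \<open>open S\<close>] by (rule holomorphic_on_imp_continuous_on)
  then obtain \<eta>' where \<eta>': "\<eta>' > 0" and deriv_close: "\<And>z. z \<in> S \<Longrightarrow> dist z z0 < \<eta>' \<Longrightarrow>
      dist (deriv (\<lambda>w. f w t0) z) (deriv (\<lambda>w. f w t0) z0) < e / 2"
    unfolding continuous_on_iff using z0 e by (metis half_gt_zero)
  define d where "d = min \<rho> (min \<eta> \<eta>')"
  show "\<exists>d>0. \<forall>x'\<in>S \<times> T. dist x' x < d \<longrightarrow>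
      dist ((\<lambda>(z,t). deriv (\<lambda>w. f w t) z) x') ((\<lambda>(z,t). deriv (\<lambda>w. f w t) z) x) < e"
  proof (intro exI[of _ d] conjI ballI impI)
    show "d > 0" using \<rho> \<eta> \<eta>' by (simp add: d_def)
    fix x' assume "x' \<in> S \<times> T" "dist x' x < d"
    then obtain z t where x'_eq: "x' = (z, t)" and z: "z \<in> S" and t: "t \<in> T"
      and dz: "dist z z0 < d" and dt: "dist t t0 < d"
      using x_eq dist_fst_le[of x' x] dist_snd_le[of x' x] by fastforce
    have cball_z: "cball z \<rho> \<subseteq> cball z0 (2 * \<rho>)"
      using dz by (simp add: cball_subset_cball_iff d_def)
    have "dist (deriv (\<lambda>w. f w t) z) (deriv (\<lambda>w. f w t0) z) \<le> (e * \<rho> / 2) / \<rho>"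
      using hol[OF t] hol[OF t0] \<open>open S\<close> order_trans[OF cball_z cball_S] \<rho>
    proof (rule dist_deriv_le_Cauchy)
      show "dist (f w t) (f w t0) \<le> e * \<rho> / 2" if "w \<in> cball z \<rho>" for w
        using f_close[OF subsetD[OF cball_z that] t] dt by (simp add: d_def)
    qed
    moreover have "dist (deriv (\<lambda>w. f w t0) z) (deriv (\<lambda>w. f w t0) z0) < e / 2"
      using deriv_close z dz by (simp add: d_def)
    ultimately show "dist ((\<lambda>(z,t). deriv (\<lambda>w. f w t) z) x') ((\<lambda>(z,t). deriv (\<lambda>w. f w t) z) x) < e"
      using \<rho> dist_triangle[of "deriv (\<lambda>w. f w t) z" "deriv (\<lambda>w. f w t0) z0" "deriv (\<lambda>w. f w t0) z"]
      by (simp add: x_eq x'_eq)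
  qed
qed

lemma has_vector_derivative_holomorphic_param_comp:
  fixes f :: "complex \<Rightarrow> real \<Rightarrow> complex" and w :: "real \<Rightarrow> complex"
  assumes "open S" "convex S"
    and hol: "\<And>t. t \<in> T \<Longrightarrow> (\<lambda>z. f z t) holomorphic_on S"
    and deriv_cont: "continuous_on (S \<times> T) (\<lambda>(z,t). deriv (\<lambda>w. f w t) z)"
    and f_t: "\<And>z t. z \<in> S \<Longrightarrow> t \<in> T \<Longrightarrow> ((\<lambda>s. f z s) has_vector_derivative Dt z t) (at t within T)"
    and w: "(w has_vector_derivative w') (at s within I)" and "I \<subseteq> T" "s \<in> I"
    and w_S: "\<And>s. s \<in> I \<Longrightarrow> w s \<in> S"
  shows "((\<lambda>s. f (w s) s) has_vector_derivative deriv (\<lambda>v. f v s) (w s) * w' + Dt (w s) s) (at s within I)"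
proof -
  have s: "s \<in> T" and ws: "w s \<in> S" using assms(7,8) w_S by auto
  have J: "((\<lambda>(x,y). f y x) has_derivative
      (\<lambda>(tx,ty). tx *\<^sub>R Dt (w s) s + blinfun_mult_right (deriv (\<lambda>v. f v s) (w s)) ty))
      (at (s, w s) within T \<times> S)"
  proof (rule has_derivative_partialsI)
    show "((\<lambda>x. f (w s) x) has_derivative (\<lambda>h. h *\<^sub>R Dt (w s) s)) (at s within T)"
      using f_t[OF ws s] by (simp add: has_vector_derivative_def)
    show "((\<lambda>y. f y x) has_derivative blinfun_mult_right (deriv (\<lambda>v. f v x) y)) (at y within S)"
      if "x \<in> T" "y \<in> S" for x y
    proof -
      have "(\<lambda>z. f z x) field_differentiable at y"
        using hol[OF that(1)] that(2) \<open>open S\<close> holomorphic_on_imp_differentiable_at by blast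
      then show ?thesis
        by (auto simp: DERIV_deriv_iff_field_differentiable[symmetric] has_field_derivative_def
            intro: has_derivative_at_withinI)
    qed
    have "continuous_on (T \<times> S) ((\<lambda>(z,t). deriv (\<lambda>v. f v t) z) \<circ> prod.swap)"
      by (rule continuous_on_compose[OF continuous_on_swap continuous_on_subset[OF deriv_cont]]) auto
    then have "continuous (at (s, w s) within T \<times> S) (\<lambda>(t,z). deriv (\<lambda>v. f v t) z)"
      using s ws by (simp add: continuous_on_eq_continuous_within o_def case_prod_unfold)
    from bounded_linear.continuous[OF bounded_linear_blinfun_mult_right this]
    show "continuous (at (s, w s) within T \<times> S) (\<lambda>(x, y). blinfun_mult_right (deriv (\<lambda>v. f v x) y))"
      by (simp add: case_prod_beta')
  qed (use ws \<open>convex S\<close> in auto)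
  have path: "((\<lambda>t. (t, w t)) has_derivative (\<lambda>h. (h, h *\<^sub>R w'))) (at s within I)"
    using w by (auto intro!: derivative_eq_intros simp: has_vector_derivative_def)
  have "((\<lambda>t. f (w t) t) has_derivative
      (\<lambda>h. h *\<^sub>R Dt (w s) s + deriv (\<lambda>v. f v s) (w s) * (h *\<^sub>R w'))) (at s within I)"
    using has_derivative_in_compose[OF path has_derivative_subset[OF J]] assms(7) w_S by auto
  then show ?thesis unfolding has_vector_derivative_def
    by (rule has_derivative_eq_rhs) (simp add: fun_eq_iff algebra_simps scaleR_conv_of_real)
qed

section \<open>A maximum principle for evolving families\<close>

lemma MVT_deriv_gt:
  fixes \<phi> \<phi>' :: "real \<Rightarrow> real"
  assumes "a < b" "continuous_on {a..b} \<phi>"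
    and deriv: "\<And>x. a < x \<Longrightarrow> x < b \<Longrightarrow> (\<phi> has_real_derivative \<phi>' x) (at x)"
    and "\<phi> b - \<phi> a > \<epsilon> * (b - a)"
  shows "\<exists>x. a < x \<and> x < b \<and> \<phi>' x > \<epsilon>"
proof -
  obtain l x where x: "a < x" "x < b" and l: "(\<phi> has_real_derivative l) (at x)"
    and eq: "\<phi> b - \<phi> a = (b - a) * l"
    using MVT[OF assms(1,2)] deriv real_differentiable_def by meson
  have "l = \<phi>' x" using DERIV_unique[OF l deriv[OF x]] .
  moreover have "l > \<epsilon>" using eq assms(1,4) by (simp add: mult.commute mult_less_cancel_left_pos)
  ultimately show ?thesis using x by blast
qed

lemma last_time_in_closed:
  fixes S :: "real set"
  assumes "closed S" "0 \<in> S" "t1 \<notin> S" "0 \<le> t1"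
  obtains ts where "ts \<in> S" "0 \<le> ts" "ts < t1" "\<And>\<tau>. ts < \<tau> \<Longrightarrow> \<tau> \<le> t1 \<Longrightarrow> \<tau> \<notin> S"
proof -
  define S' where "S' = S \<inter> {0..t1}"
  have "closed S'" "bdd_above S'" "0 \<in> S'"
    using assms by (auto simp: S'_def intro: bdd_aboveI[of _ t1])
  then have "Sup S' \<in> S'" using closed_contains_Sup by blast
  moreover have "\<tau> \<notin> S" if "Sup S' < \<tau>" "\<tau> \<le> t1" for \<tau>
    using that cSup_upper[OF _ \<open>bdd_above S'\<close>, of \<tau>] \<open>Sup S' \<in> S'\<close> by (auto simp: S'_def)
  moreover have "Sup S' \<noteq> t1" using \<open>Sup S' \<in> S'\<close> assms(3) by (auto simp: S'_def)
  ultimately show thesis using that[of "Sup S'"] by (auto simp: S'_def)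
qed

lemma tendsto_continuous_on_Pair:
  assumes "continuous_on (A \<times> B) (\<lambda>(x,y). F x y)" "x \<longlonglongrightarrow> a" "y \<longlonglongrightarrow> b"
    and "a \<in> A" "b \<in> B" "\<And>n. x n \<in> A" "\<And>n. y n \<in> B"
  shows "(\<lambda>n. F (x n) (y n)) \<longlonglongrightarrow> F a b"
  using continuous_on_tendsto_compose[OF assms(1) tendsto_Pair[OF assms(2,3)]] assms(4-)
  by (simp add: mem_Times_iff)

lemma maximiser_with_growth_at_exit:
  fixes N g :: "'a::metric_space \<Rightarrow> real \<Rightarrow> real"
  assumes "compact K"
    and cont_N: "continuous_on (K \<times> {0..}) (\<lambda>(z,t). N z t)"
    and cont_g: "continuous_on (K \<times> {0..}) (\<lambda>(z,t). g z t)"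
    and deriv_N: "\<And>z t. z \<in> K \<Longrightarrow> t > 0 \<Longrightarrow> ((\<lambda>s. N z s) has_real_derivative g z t) (at t)"
    and "ts \<ge> 0" and below: "\<And>z. z \<in> K \<Longrightarrow> N z ts \<le> c + \<epsilon> * ts"
    and exits: "\<And>n. \<exists>z\<in>K. \<exists>\<tau>. ts < \<tau> \<and> \<tau> \<le> ts + 1 / real (Suc n) \<and> N z \<tau> > c + \<epsilon> * \<tau>"
  obtains l where "l \<in> K" "\<And>z. z \<in> K \<Longrightarrow> N z ts \<le> N l ts" "g l ts \<ge> \<epsilon>"
proof -
  obtain zs \<tau>s where zs: "\<And>n. zs n \<in> K" and \<tau>s: "\<And>n. ts < \<tau>s n" "\<And>n. \<tau>s n \<le> ts + 1 / real (Suc n)"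
    "\<And>n. N (zs n) (\<tau>s n) > c + \<epsilon> * \<tau>s n"
    using exits by metis
  have cont_Nt: "continuous_on {0..} (\<lambda>s. N z s)" if "z \<in> K" for z
    using continuous_on_compose2[OF cont_N continuous_on_Pair[OF continuous_on_const continuous_on_id]] that
    by auto
  have "\<exists>\<sigma>. ts < \<sigma> \<and> \<sigma> < \<tau>s n \<and> g (zs n) \<sigma> > \<epsilon>" for n
  proof (rule MVT_deriv_gt[where \<phi> = "\<lambda>s. N (zs n) s"])
    show "continuous_on {ts..\<tau>s n} (\<lambda>s. N (zs n) s)"
      by (rule continuous_on_subset[OF cont_Nt[OF zs]]) (use \<open>ts \<ge> 0\<close> in auto)
    show "((\<lambda>s. N (zs n) s) has_real_derivative g (zs n) x) (at x)" if "ts < x" for x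
      using deriv_N[OF zs] that \<open>ts \<ge> 0\<close> by simp
    show "N (zs n) (\<tau>s n) - N (zs n) ts > \<epsilon> * (\<tau>s n - ts)"
      using below[OF zs, of n] \<tau>s(3)[of n] by (simp add: algebra_simps)
  qed (fact \<tau>s(1))
  then obtain \<sigma>s where \<sigma>s: "\<And>n. ts < \<sigma>s n" "\<And>n. \<sigma>s n < \<tau>s n" and g_\<sigma>s: "\<And>n. g (zs n) (\<sigma>s n) > \<epsilon>"
    by metis
  obtain l k where l: "l \<in> K" and "strict_mono k" and "(zs \<circ> k) \<longlonglongrightarrow> l"
    using compact_imp_seq_compact[OF \<open>compact K\<close>] zs by (metis seq_compactE)
  then have lim: "(\<lambda>n. zs (k n)) \<longlonglongrightarrow> l" by (simp add: o_def)
  have "(\<lambda>n. 1 / real (Suc n)) \<longlonglongrightarrow> 0" by (rule LIMSEQ_Suc[OF lim_const_over_n])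
  from tendsto_add[OF tendsto_const LIMSEQ_subseq_LIMSEQ[OF this \<open>strict_mono k\<close>], of ts]
  have lim_ub: "(\<lambda>n. ts + 1 / real (Suc (k n))) \<longlonglongrightarrow> ts" by (simp add: o_def)
  have lim_\<tau>: "(\<lambda>n. \<tau>s (k n)) \<longlonglongrightarrow> ts"
    by (rule tendsto_sandwich[OF _ _ tendsto_const lim_ub]) (use \<tau>s(1,2) in \<open>auto intro!: always_eventually less_imp_le\<close>)
  have lim_\<sigma>: "(\<lambda>n. \<sigma>s (k n)) \<longlonglongrightarrow> ts"
    by (rule tendsto_sandwich[OF _ _ tendsto_const lim_\<tau>]) (use \<sigma>s in \<open>auto intro!: always_eventually less_imp_le\<close>)
  have nonneg: "0 \<le> \<sigma>s n" "0 \<le> \<tau>s n" for n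
    using \<sigma>s(1)[of n] \<tau>s(1)[of n] \<open>ts \<ge> 0\<close> by auto
  have "(\<lambda>n. g (zs (k n)) (\<sigma>s (k n))) \<longlonglongrightarrow> g l ts"
    using tendsto_continuous_on_Pair[OF cont_g lim lim_\<sigma>] l \<open>ts \<ge> 0\<close> zs nonneg by auto
  then have "g l ts \<ge> \<epsilon>" by (rule LIMSEQ_le_const) (use g_\<sigma>s less_imp_le in blast)
  have "(\<lambda>n. N (zs (k n)) (\<tau>s (k n))) \<longlonglongrightarrow> N l ts"
    using tendsto_continuous_on_Pair[OF cont_N lim lim_\<tau>] l \<open>ts \<ge> 0\<close> zs nonneg by auto
  moreover have "(\<lambda>n. c + \<epsilon> * \<tau>s (k n)) \<longlonglongrightarrow> c + \<epsilon> * ts"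
    by (intro tendsto_intros lim_\<tau>)
  ultimately have "c + \<epsilon> * ts \<le> N l ts"
    using \<tau>s(3) by (intro LIMSEQ_le[of "\<lambda>n. c + \<epsilon> * \<tau>s (k n)"]) (auto intro: less_imp_le)
  then show thesis using that l below \<open>g l ts \<ge> \<epsilon>\<close> by fastforce
qed

text \<open>If the bound failed, it would also fail after adding \<open>\<epsilon> t\<close>; at the last time where the
  perturbed bound holds, a maximiser would have growth at least \<open>\<epsilon> > 0\<close>.\<close>
lemma le_const_if_deriv_nonpos_at_max:
  fixes N g :: "'a::metric_space \<Rightarrow> real \<Rightarrow> real"
  assumes "compact K"
    and cont_N: "continuous_on (K \<times> {0..}) (\<lambda>(z,t). N z t)"
    and cont_g: "continuous_on (K \<times> {0..}) (\<lambda>(z,t). g z t)"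
    and deriv_N: "\<And>z t. z \<in> K \<Longrightarrow> t > 0 \<Longrightarrow> ((\<lambda>s. N z s) has_real_derivative g z t) (at t)"
    and at_max: "\<And>z t. z \<in> K \<Longrightarrow> t \<ge> 0 \<Longrightarrow> (\<And>y. y \<in> K \<Longrightarrow> N y t \<le> N z t) \<Longrightarrow> g z t \<le> 0"
    and init: "\<And>z. z \<in> K \<Longrightarrow> N z 0 \<le> c"
    and "z1 \<in> K" "t1 \<ge> 0"
  shows "N z1 t1 \<le> c"
proof (rule ccontr)
  assume "\<not> N z1 t1 \<le> c"
  then have t1: "t1 > 0" using init[OF \<open>z1 \<in> K\<close>] \<open>t1 \<ge> 0\<close> by (cases "t1 = 0") auto
  define \<epsilon> where "\<epsilon> = (N z1 t1 - c) / (2 * t1)"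
  have \<epsilon>: "\<epsilon> > 0" "N z1 t1 > c + \<epsilon> * t1"
    using \<open>\<not> N z1 t1 \<le> c\<close> t1 by (auto simp: \<epsilon>_def field_simps)
  define S where "S = {t \<in> {0..}. \<forall>z\<in>K. N z t \<le> c + \<epsilon> * t}"
  have "S = {0..} \<inter> (\<Inter>z\<in>K. {t \<in> {0..}. N z t \<le> c + \<epsilon> * t})"
    by (auto simp: S_def)
  moreover have "closed {t \<in> {0..}. N z t \<le> c + \<epsilon> * t}" if "z \<in> K" for z
    using continuous_on_compose2[OF cont_N continuous_on_Pair[OF continuous_on_const continuous_on_id]] that
    by (intro continuous_on_closed_Collect_le continuous_intros closed_atLeast) auto
  ultimately have "closed S" by auto
  moreover have "0 \<in> S" "t1 \<notin> S" using init \<epsilon>(2) \<open>z1 \<in> K\<close> by (force simp: S_def not_le)+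
  ultimately obtain ts where "ts \<in> S" and ts: "0 \<le> ts" "ts < t1"
    and not_S: "\<And>\<tau>. ts < \<tau> \<Longrightarrow> \<tau> \<le> t1 \<Longrightarrow> \<tau> \<notin> S"
    using last_time_in_closed \<open>t1 \<ge> 0\<close> by metis
  have below: "N z ts \<le> c + \<epsilon> * ts" if "z \<in> K" for z using \<open>ts \<in> S\<close> that by (auto simp: S_def)
  have exits: "\<exists>z\<in>K. \<exists>\<tau>. ts < \<tau> \<and> \<tau> \<le> ts + 1 / real (Suc n) \<and> N z \<tau> > c + \<epsilon> * \<tau>" for n
  proof -
    define \<tau> where "\<tau> = ts + min (t1 - ts) (1 / real (Suc n))"
    have "ts < \<tau>" "\<tau> \<le> t1" "\<tau> \<le> ts + 1 / real (Suc n)" using ts by (auto simp: \<tau>_def)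
    with not_S[of \<tau>] ts show ?thesis by (auto simp: S_def not_le)
  qed
  obtain l where "l \<in> K" "\<And>z. z \<in> K \<Longrightarrow> N z ts \<le> N l ts" "g l ts \<ge> \<epsilon>"
    using maximiser_with_growth_at_exit[OF assms(1-4) ts(1) below exits] by blast
  with at_max[of l ts] ts(1) \<epsilon>(1) show False by fastforce
qed

section \<open>Bounds for solutions of the Loewner equation\<close>

lemma Re_Herglotz_kernel_nonneg:
  fixes e z :: complex
  assumes "norm e = 1" "norm z < 1"
  shows "Re ((e + z) / (e - z)) \<ge> 0"
proof -
  have "Re (e + z) * Re (e - z) + Im (e + z) * Im (e - z) = (norm e)\<^sup>2 - (norm z)\<^sup>2"
    unfolding cmod_power2 by (simp add: algebra_simps power2_eq_square)
  also have "\<dots> \<ge> 0" using assms by (simp add: abs_square_le_1 power_le_one)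
  finally show ?thesis unfolding Re_divide' by simp
qed

lemma has_real_derivative_Re_cnj_mult_comp:
  fixes F \<gamma> :: "complex \<Rightarrow> complex"
  assumes "F field_differentiable at z0" "(\<gamma> has_field_derivative \<gamma>') (at 0)" "\<gamma> 0 = z0"
  shows "((\<lambda>x. Re (c * F (\<gamma> (of_real x)))) has_real_derivative Re (c * deriv F z0 * \<gamma>')) (at 0)"
proof -
  have "((\<lambda>w. c * F w) has_field_derivative c * deriv F z0) (at (\<gamma> 0))"
    using DERIV_cmult[OF assms(1)[folded DERIV_deriv_iff_field_differentiable]] assms(3) by simp
  from DERIV_chain[OF this assms(2)]
  have "((\<lambda>x. c * F (\<gamma> x)) has_field_derivative c * deriv F z0 * \<gamma>') (at (of_real 0))"
    by (simp add: o_def)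
  from has_field_derivative_Re[OF has_vector_derivative_real_field[OF this]] show ?thesis by simp
qed

text \<open>Up to positive factors, \<open>Re c\<close> and \<open>- Im c\<close> for \<open>c = cnj (F z0) * z0 * deriv F z0\<close> are the
  radial and the angular derivative of \<open>\<bar>F\<bar>\<^sup>2\<close> at \<open>z0\<close>.\<close>
lemma max_modulus_cball_radial_deriv:
  fixes F :: "complex \<Rightarrow> complex"
  assumes "F field_differentiable at z0" "z0 \<in> cball 0 r"
    and max: "\<And>z. z \<in> cball 0 r \<Longrightarrow> norm (F z) \<le> norm (F z0)"
  shows "Im (cnj (F z0) * z0 * deriv F z0) = 0 \<and> Re (cnj (F z0) * z0 * deriv F z0) \<ge> 0"
proof -
  define c where "c = cnj (F z0) * z0 * deriv F z0"
  define G where "G \<zeta> = Re (cnj (F z0) * F \<zeta>)" for \<zeta>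
  have G_le: "G \<zeta> \<le> G z0" if "\<zeta> \<in> cball 0 r" for \<zeta>
  proof -
    have "G \<zeta> \<le> norm (F z0) * norm (F \<zeta>)"
      using complex_Re_le_cmod[of "cnj (F z0) * F \<zeta>"] by (simp add: G_def norm_mult)
    also have "\<dots> \<le> norm (F z0) * norm (F z0)" using max[OF that] by (simp add: mult_left_mono)
    also have "\<dots> = G z0" by (simp add: G_def) (metis cmod_power2 power2_eq_square)
    finally show ?thesis .
  qed
  have "cnj (F z0) * deriv F z0 * (z0 * \<i>) = \<i> * c" by (simp add: c_def mult_ac)
  moreover have "((\<lambda>\<theta>. G (z0 * exp (\<i> * of_real \<theta>))) has_field_derivative
      Re (cnj (F z0) * deriv F z0 * (z0 * \<i>))) (at 0)"
    unfolding G_def by (rule has_real_derivative_Re_cnj_mult_comp[OF assms(1)])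
      (auto intro!: derivative_eq_intros)
  ultimately have "((\<lambda>\<theta>. G (z0 * exp (\<i> * of_real \<theta>))) has_field_derivative Re (\<i> * c)) (at 0)"
    by metis
  then have "Re (\<i> * c) = 0"
  proof (rule DERIV_local_max[of _ _ _ 1])
    show "\<forall>y. \<bar>0 - y\<bar> < 1 \<longrightarrow> G (z0 * exp (\<i> * of_real y)) \<le> G (z0 * exp (\<i> * of_real 0))"
      using G_le assms(2) by (simp add: norm_mult)
  qed simp
  moreover have "Re c \<ge> 0"
  proof (rule ccontr)
    assume "\<not> Re c \<ge> 0"
    have "((\<lambda>s. G (z0 * (1 - of_real s))) has_field_derivative
        Re (cnj (F z0) * deriv F z0 * - z0)) (at 0)"
      unfolding G_def by (rule has_real_derivative_Re_cnj_mult_comp[OF assms(1)])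
        (auto intro!: derivative_eq_intros)
    moreover have "cnj (F z0) * deriv F z0 * - z0 = - c" by (simp add: c_def mult_ac)
    ultimately have "((\<lambda>s. G (z0 * (1 - of_real s))) has_field_derivative Re (- c)) (at 0)"
      by metis
    from DERIV_pos_inc_right[OF this] \<open>\<not> Re c \<ge> 0\<close> obtain d where "d > 0"
      and inc: "\<And>h. h > 0 \<Longrightarrow> h < d \<Longrightarrow> G (z0 * (1 - of_real 0)) < G (z0 * (1 - of_real (0 + h)))"
      by force
    define h where "h = min (d / 2) (1 / 2)"
    have h: "h > 0" "h < d" "h \<le> 1" using \<open>d > 0\<close> by (auto simp: h_def)
    have "1 - complex_of_real h = complex_of_real (1 - h)" by simp
    then have "norm (z0 * (1 - of_real h)) = norm z0 * (1 - h)"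
      using h by (metis norm_mult norm_of_real abs_of_nonneg diff_ge_0_iff_ge)
    also have "\<dots> \<le> norm z0" using h by (simp add: mult_left_le)
    also have "\<dots> \<le> r" using assms(2) by simp
    finally have "G (z0 * (1 - of_real h)) \<le> G z0" by (intro G_le) simp
    with inc[OF h(1,2)] show False by simp
  qed
  ultimately show ?thesis by (simp add: c_def)
qed

lemma
  assumes "loewner_sol a f"
  shows loewner_sol_continuous: "continuous_on (ball 0 1 \<times> {0..}) (\<lambda>(z,t). f z t)"
    and loewner_sol_holomorphic: "t \<ge> 0 \<Longrightarrow> (\<lambda>z. f z t) holomorphic_on ball 0 1"
    and loewner_sol_initial: "z \<in> ball 0 1 \<Longrightarrow> f z 0 = z"
    and loewner_sol_has_vector_derivative: "z \<in> ball 0 1 \<Longrightarrow> t \<ge> 0 \<Longrightarrow>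
      ((\<lambda>s. f z s) has_vector_derivative (- z * deriv (\<lambda>w. f w t) z *
        ((exp (\<i> * of_real (a * t)) + z) / (exp (\<i> * of_real (a * t)) - z)))) (at t within {0..})"
  using assms unfolding loewner_sol_def by auto

lemma loewner_sol_deriv_continuous:
  assumes "loewner_sol a f"
  shows "continuous_on (ball 0 1 \<times> {0..}) (\<lambda>(z,t). deriv (\<lambda>w. f w t) z)"
  using continuous_on_deriv_param[OF open_ball closed_atLeast] assms
    loewner_sol_continuous loewner_sol_holomorphic by blast

lemma has_real_derivative_norm_power2:
  fixes g :: "real \<Rightarrow> complex"
  assumes g: "(g has_vector_derivative D) (at t)"
  shows "((\<lambda>s. (norm (g s))\<^sup>2) has_real_derivative 2 * Re (cnj (g t) * D)) (at t)"
proof -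
  have "((\<lambda>s. (Re (g s))\<^sup>2 + (Im (g s))\<^sup>2) has_real_derivative
      2 * Re (g t) * Re D + 2 * Im (g t) * Im D) (at t)"
    by (rule derivative_eq_intros has_field_derivative_Re[OF g] has_field_derivative_Im[OF g] refl | simp)+
  then show ?thesis unfolding cmod_power2 by (simp add: algebra_simps)
qed

lemma loewner_sol_growth_nonpos_at_max:
  assumes sol: "loewner_sol a f" and "s \<ge> 0" "r < 1" "\<zeta> \<in> cball 0 r"
    and max: "\<And>y. y \<in> cball 0 r \<Longrightarrow> norm (f y s) \<le> norm (f \<zeta> s)"
  shows "Re (cnj (f \<zeta> s) * (- \<zeta> * deriv (\<lambda>w. f w s) \<zeta> *
    ((exp (\<i> * of_real (a * s)) + \<zeta>) / (exp (\<i> * of_real (a * s)) - \<zeta>)))) \<le> 0"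
proof -
  define c where "c = cnj (f \<zeta> s) * \<zeta> * deriv (\<lambda>w. f w s) \<zeta>"
  define k where "k = (exp (\<i> * of_real (a * s)) + \<zeta>) / (exp (\<i> * of_real (a * s)) - \<zeta>)"
  have "(\<lambda>w. f w s) field_differentiable at \<zeta>"
    using loewner_sol_holomorphic[OF sol \<open>s \<ge> 0\<close>] assms(3,4)
    by (intro holomorphic_on_imp_differentiable_at[of _ "ball 0 1"]) auto
  then have c: "Im c = 0 \<and> Re c \<ge> 0"
    unfolding c_def using assms(4) max by (rule max_modulus_cball_radial_deriv)
  have k: "Re k \<ge> 0"
    unfolding k_def using assms(3,4) by (intro Re_Herglotz_kernel_nonneg) auto
  have eq: "cnj (f \<zeta> s) * (- \<zeta> * deriv (\<lambda>w. f w s) \<zeta> * k) = - (c * k)"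
    by (simp add: c_def mult.assoc)
  show ?thesis unfolding k_def[symmetric] eq using c k by simp
qed

lemma loewner_sol_norm_le:
  assumes sol: "loewner_sol a f" and z: "z \<in> ball 0 1" and "t \<ge> 0"
  shows "norm (f z t) \<le> norm z"
proof -
  define r where "r = norm z"
  define p where "p \<zeta> s = (exp (\<i> * of_real (a * s)) + \<zeta>) / (exp (\<i> * of_real (a * s)) - \<zeta>)" for \<zeta> s
  define D where "D \<zeta> s = - \<zeta> * deriv (\<lambda>w. f w s) \<zeta> * p \<zeta> s" for \<zeta> s
  define N where "N \<zeta> s = (norm (f \<zeta> s))\<^sup>2" for \<zeta> s
  define g where "g \<zeta> s = 2 * Re (cnj (f \<zeta> s) * D \<zeta> s)" for \<zeta> s
  have r: "0 \<le> r" "r < 1" using z by (auto simp: r_def)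
  have K: "cball 0 r \<times> {0..} \<subseteq> ball 0 1 \<times> {0..}" using r by auto
  have cont_f: "continuous_on (cball 0 r \<times> {0..}) (\<lambda>x. f (fst x) (snd x))"
    using continuous_on_subset[OF loewner_sol_continuous[OF sol] K] by (simp add: case_prod_unfold)
  have "exp (\<i> * of_real (a * snd x)) \<noteq> fst x" if "x \<in> cball 0 r \<times> {0..}" for x
    using that r norm_exp_i_times[of "a * snd x"] by auto
  then have "continuous_on (cball 0 r \<times> {0..}) (\<lambda>x. D (fst x) (snd x))"
    using continuous_on_subset[OF loewner_sol_deriv_continuous[OF sol] K]
    unfolding D_def p_def by (intro continuous_intros) (auto simp: case_prod_unfold)
  have "N z t \<le> r\<^sup>2"
  proof (rule le_const_if_deriv_nonpos_at_max[of "cball 0 r" N g])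
    show "continuous_on (cball 0 r \<times> {0..}) (\<lambda>(\<zeta>, s). N \<zeta> s)"
      unfolding N_def case_prod_unfold by (intro continuous_intros cont_f)
    show "continuous_on (cball 0 r \<times> {0..}) (\<lambda>(\<zeta>, s). g \<zeta> s)"
      unfolding g_def case_prod_unfold by (intro continuous_intros cont_f) fact
    show "((\<lambda>s. N \<zeta> s) has_real_derivative g \<zeta> s) (at s)" if "\<zeta> \<in> cball 0 r" "s > 0" for \<zeta> s
    proof -
      have "((\<lambda>s. f \<zeta> s) has_vector_derivative D \<zeta> s) (at s within {0<..})"
        using loewner_sol_has_vector_derivative[OF sol, of \<zeta> s] that r
        by (auto simp: D_def p_def intro: has_vector_derivative_within_subset)
      then have "((\<lambda>s. f \<zeta> s) has_vector_derivative D \<zeta> s) (at s)"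
        using at_within_open[of s "{0<..}"] that by simp
      from has_real_derivative_norm_power2[OF this] show ?thesis by (simp add: N_def g_def)
    qed
    show "g \<zeta> s \<le> 0" if "\<zeta> \<in> cball 0 r" "s \<ge> 0" and max: "\<And>y. y \<in> cball 0 r \<Longrightarrow> N y s \<le> N \<zeta> s" for \<zeta> s
    proof -
      have "norm (f y s) \<le> norm (f \<zeta> s)" if "y \<in> cball 0 r" for y
        using max[OF that] unfolding N_def by (rule power2_le_imp_le) simp
      from loewner_sol_growth_nonpos_at_max[OF sol that(2) r(2) that(1) this]
      show ?thesis by (simp add: g_def D_def p_def)
    qed
    show "N \<zeta> 0 \<le> r\<^sup>2" if "\<zeta> \<in> cball 0 r" for \<zeta>
      using that r loewner_sol_initial[OF sol, of \<zeta>] by (auto simp: N_def intro: power_mono)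
  qed (use z \<open>t \<ge> 0\<close> in \<open>auto simp: r_def\<close>)
  then show ?thesis unfolding N_def r_def by (rule power2_le_imp_le) simp
qed

lemma loewner_sol_norm_deriv_le:
  assumes sol: "loewner_sol a f" and "norm \<zeta> \<le> R" "R < 1" "s \<ge> 0"
  shows "norm (deriv (\<lambda>w. f w s) \<zeta>) \<le> 2 / (1 - R)"
proof -
  have sub: "cball \<zeta> ((1 - R) / 2) \<subseteq> ball 0 1"
  proof
    fix w assume "w \<in> cball \<zeta> ((1 - R) / 2)"
    then have "norm w \<le> norm \<zeta> + (1 - R) / 2"
      using norm_triangle_ineq2[of w \<zeta>] by (simp add: dist_norm norm_minus_commute) argo
    then have "norm w < 1" using assms(2,3) by argo
    then show "w \<in> ball 0 1" by simp
  qed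
  have "norm (deriv (\<lambda>w. f w s) \<zeta>) \<le> 1 / ((1 - R) / 2)"
  proof (rule norm_deriv_le_Cauchy[OF loewner_sol_holomorphic[OF sol \<open>s \<ge> 0\<close>] sub])
    show "0 < (1 - R) / 2" using assms(3) by simp
    show "norm (f w s) \<le> 1" if "w \<in> cball \<zeta> ((1 - R) / 2)" for w
      using loewner_sol_norm_le[OF sol _ \<open>s \<ge> 0\<close>, of w] subsetD[OF sub that] by fastforce
  qed
  then show ?thesis by simp
qed

section \<open>An approximate characteristic\<close>

lemma norm_Ln_one_minus_le:
  fixes x :: complex
  assumes "norm x \<le> r" "r < 1"
  shows "norm (Ln (1 - x)) \<le> pi - ln (1 - r)"
proof -
  have r: "0 \<le> r" using assms(1) norm_ge_zero order_trans by blast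
  have lower: "norm (1 - x) \<ge> 1 - r" using norm_triangle_ineq2[of 1 x] assms by simp
  have upper: "norm (1 - x) \<le> 1 + r" using norm_triangle_ineq4[of 1 x] assms by simp
  have "1 - x \<noteq> 0" using lower assms by auto
  have "ln (norm (1 - x)) \<ge> ln (1 - r)" using lower assms by (subst ln_le_cancel_iff) auto
  moreover have "ln (norm (1 - x)) \<le> - ln (1 - r)"
  proof -
    have "ln (norm (1 - x)) \<le> ln (1 + r)" using upper \<open>1 - x \<noteq> 0\<close> r by simp
    also have "\<dots> \<le> r" by (rule ln_add_one_self_le_self[OF r])
    also have "r \<le> - ln (1 - r)" using ln_le_minus_one[of "1 - r"] assms by simp
    finally show ?thesis .
  qed
  ultimately have "\<bar>Re (Ln (1 - x))\<bar> \<le> - ln (1 - r)" using \<open>1 - x \<noteq> 0\<close> by simp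
  moreover have "Re (1 - x) > 0" using complex_Re_le_cmod[of x] assms by simp
  then have "\<bar>Im (Ln (1 - x))\<bar> < pi / 2" by (rule Re_Ln_pos_lt_imp)
  ultimately show ?thesis using cmod_le[of "Ln (1 - x)"] pi_gt_zero by linarith
qed

definition radial_flow :: "complex \<Rightarrow> real \<Rightarrow> complex \<Rightarrow> complex" where
  "radial_flow z t \<sigma> = z * exp (\<sigma> - of_real t)"

definition inv_driving_point :: "real \<Rightarrow> complex \<Rightarrow> complex" where
  "inv_driving_point a \<sigma> = exp (- (\<i> * of_real a * \<sigma>))"

text \<open>With \<open>v = radial_flow z t\<close> and \<open>u = inv_driving_point a\<close>, the characteristics of the
  Loewner PDE solve \<open>w' = w (1 + w u) / (1 - w u) = w + 2 w\<^sup>2 u / (1 - w u)\<close>. Freezing \<open>w = v\<close>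
  in the correction term gives a linear equation whose exact solution is \<open>char_approx\<close>; as \<open>u\<close>
  oscillates with frequency \<open>a\<close>, it stays within \<open>O(1/a)\<close> of \<open>v\<close>.\<close>
definition char_approx :: "real \<Rightarrow> complex \<Rightarrow> real \<Rightarrow> complex \<Rightarrow> complex" where
  "char_approx a z t \<sigma> = radial_flow z t \<sigma> - 2 / (1 - \<i> * of_real a) *
     (radial_flow z t \<sigma> * Ln (1 - radial_flow z t \<sigma> * inv_driving_point a \<sigma>))"

lemma norm_radial_flow_le:
  assumes "norm z \<le> r" "s \<le> t"
  shows "norm (radial_flow z t (of_real s)) \<le> r"
proof -
  have "norm (radial_flow z t (of_real s)) = norm z * exp (s - t)"
    by (simp add: radial_flow_def norm_mult flip: of_real_diff)
  also have "\<dots> \<le> norm z" using assms(2) by (intro mult_right_le_one_le) auto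
  finally show ?thesis using assms(1) by simp
qed

lemma norm_inv_driving_point [simp]: "norm (inv_driving_point a (of_real s)) = 1"
  by (simp add: inv_driving_point_def)

lemma norm_char_approx_sub_le:
  assumes "norm z \<le> r" "r < 1" "s \<le> t" "a > 0"
  shows "norm (char_approx a z t (of_real s) - radial_flow z t (of_real s)) \<le> 2 * (pi - ln (1 - r)) / a"
proof -
  define v where "v = radial_flow z t (of_real s)"
  have v: "norm v \<le> r" using norm_radial_flow_le[OF assms(1,3)] by (simp add: v_def)
  have "a \<le> norm (1 - \<i> * of_real a)" using abs_Im_le_cmod[of "1 - \<i> * of_real a"] assms(4) by simp
  then have "norm (2 / (1 - \<i> * of_real a)) \<le> 2 / a"
    using assms(4) by (simp add: norm_divide divide_left_mono)
  moreover have "norm (Ln (1 - v * inv_driving_point a (of_real s))) \<le> pi - ln (1 - r)"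
    using v assms(2) by (intro norm_Ln_one_minus_le) (auto simp: norm_mult)
  moreover have "norm v \<le> 1" using v assms(2) by simp
  ultimately have "norm (2 / (1 - \<i> * of_real a)) * norm v * norm (Ln (1 - v * inv_driving_point a (of_real s)))
      \<le> 2 / a * 1 * (pi - ln (1 - r))"
    using assms(4) by (intro mult_mono) auto
  moreover have "char_approx a z t (of_real s) - v =
      - (2 / (1 - \<i> * of_real a) * (v * Ln (1 - v * inv_driving_point a (of_real s))))"
    by (simp add: char_approx_def v_def)
  ultimately show ?thesis by (simp only: v_def norm_minus_cancel norm_mult mult.assoc) simp
qed

lemma char_approx_has_field_derivative:
  fixes a t :: real and z \<sigma> :: complex
  defines "v \<equiv> radial_flow z t \<sigma>" and "u \<equiv> inv_driving_point a \<sigma>"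
  assumes "norm (v * u) < 1"
  shows "(char_approx a z t has_field_derivative char_approx a z t \<sigma> + 2 * v\<^sup>2 * u / (1 - v * u)) (at \<sigma>)"
proof -
  define c where "c = - 2 / (1 - \<i> * of_real a)"
  have "Re (1 - \<i> * of_real a) = 1" by simp
  then have c: "c * (1 - \<i> * of_real a) = - 2" unfolding c_def by (auto simp: field_simps)
  have "Re (1 - v * u) > 0" using complex_Re_le_cmod[of "v * u"] assms(3) by simp
  then have nonpos: "1 - v * u \<notin> \<real>\<^sub>\<le>\<^sub>0" and nz: "1 - v * u \<noteq> 0"
    by (auto simp: complex_nonpos_Reals_iff simp del: minus_complex.sel)
  define D where "D = - (v * u + (- (\<i> * of_real a)) * u * v)"
  have V: "(radial_flow z t has_field_derivative v) (at \<sigma>)"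
    unfolding v_def radial_flow_def by (auto intro!: derivative_eq_intros)
  have U: "(inv_driving_point a has_field_derivative - (\<i> * of_real a) * u) (at \<sigma>)"
    unfolding u_def inv_driving_point_def by (auto intro!: derivative_eq_intros)
  have "((\<lambda>x. 1 - radial_flow z t x * inv_driving_point a x) has_field_derivative D) (at \<sigma>)"
    using DERIV_diff[OF DERIV_const DERIV_mult[OF V U]] by (simp add: D_def v_def u_def)
  from DERIV_chain2[OF has_field_derivative_Ln[OF nonpos[unfolded v_def u_def]] this]
  have "((\<lambda>x. Ln (1 - radial_flow z t x * inv_driving_point a x)) has_field_derivative
      inverse (1 - v * u) * D) (at \<sigma>)" by (simp add: v_def u_def)
  from DERIV_add[OF V DERIV_cmult[OF DERIV_mult[OF V this], of c]]
  have "((\<lambda>x. radial_flow z t x + c * (radial_flow z t x * Ln (1 - radial_flow z t x * inv_driving_point a x)))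
      has_field_derivative v + c * (v * Ln (1 - v * u) + inverse (1 - v * u) * D * v)) (at \<sigma>)"
    by (simp add: v_def u_def)
  moreover have "(\<lambda>x. radial_flow z t x + c * (radial_flow z t x * Ln (1 - radial_flow z t x * inv_driving_point a x)))
      = char_approx a z t"
    by (simp add: fun_eq_iff char_approx_def c_def)
  moreover have "c * (inverse (1 - v * u) * D * v) = (c * (1 - \<i> * of_real a)) * (- (v\<^sup>2 * u) / (1 - v * u))"
    using nz by (simp add: D_def field_simps power2_eq_square)
  then have "v + c * (v * Ln (1 - v * u) + inverse (1 - v * u) * D * v)
      = char_approx a z t \<sigma> + 2 * v\<^sup>2 * u / (1 - v * u)"
    unfolding c by (simp add: char_approx_def c_def v_def u_def distrib_left)
  ultimately show ?thesis by simp
qed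

text \<open>Along \<open>w = char_approx\<close> the Loewner PDE leaves only a defect proportional to
  \<open>v - w\<close>, where \<open>e = 1 / u\<close> is the driving point.\<close>
lemma char_defect_eq:
  fixes e u v w d :: complex
  assumes "e * u = 1" "1 - v * u \<noteq> 0" "1 - w * u \<noteq> 0" "e - w \<noteq> 0"
  shows "d * (w + 2 * v\<^sup>2 * u / (1 - v * u)) + (- w * d * ((e + w) / (e - w))) =
    2 * u * d * (v - w) * (v + w - v * w * u) / ((1 - v * u) * (1 - w * u))"
proof -
  have "u \<noteq> 0" using assms(1) by auto
  then have kernel: "(e + w) / (e - w) = (1 + w * u) / (1 - w * u)"
    using assms(1,3,4) by (simp add: field_simps)
  show ?thesis unfolding kernel using assms(2,3) by (simp add: field_simps power2_eq_square)
qed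

lemma norm_char_defect_le:
  fixes u v w d :: complex
  assumes "norm u = 1" "norm v \<le> R" "norm w \<le> R" "R < 1" "norm d \<le> B" "norm (v - w) \<le> \<Delta>"
  shows "norm (2 * u * d * (v - w) * (v + w - v * w * u) / ((1 - v * u) * (1 - w * u)))
    \<le> 6 * B * \<Delta> / (1 - R)\<^sup>2"
proof -
  have gap: "norm (1 - x * u) \<ge> 1 - R" if "norm x \<le> R" for x
    using norm_triangle_ineq2[of 1 "x * u"] that assms(1) by (simp add: norm_mult)
  have "norm (v + w - v * w * u) \<le> norm (v + w) + norm (v * w * u)" by (rule norm_triangle_ineq4)
  also have "\<dots> \<le> norm v + norm w + norm v * norm w * norm u"
    using norm_triangle_ineq[of v w] by (simp add: norm_mult)
  also have "\<dots> \<le> 1 + 1 + 1 * 1 * 1"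
    using assms(1-4) by (intro add_mono mult_mono) auto
  finally have "norm (v + w - v * w * u) \<le> 3" by simp
  moreover have B: "0 \<le> B" and \<Delta>: "0 \<le> \<Delta>" using assms(5,6) norm_ge_zero order_trans by blast+
  ultimately have "2 * norm d * norm (v - w) * norm (v + w - v * w * u) \<le> 2 * B * \<Delta> * 3"
    using assms(5,6) by (intro mult_mono) auto
  moreover have "(1 - R) * (1 - R) \<le> norm (1 - v * u) * norm (1 - w * u)"
    using gap[OF assms(2)] gap[OF assms(3)] assms(4) by (intro mult_mono) auto
  ultimately have "2 * norm d * norm (v - w) * norm (v + w - v * w * u) / (norm (1 - v * u) * norm (1 - w * u))
      \<le> 2 * B * \<Delta> * 3 / ((1 - R) * (1 - R))"
    using assms(4) B \<Delta> by (intro frac_le) auto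
  then show ?thesis using assms(1) by (simp add: norm_mult norm_divide power2_eq_square)
qed

lemma loewner_sol_char_defect_le:
  fixes a s :: real and v w :: complex
  defines "u \<equiv> inv_driving_point a (of_real s)" and "e \<equiv> exp (\<i> * of_real (a * s))"
  assumes sol: "loewner_sol a f" and "s \<ge> 0" and v: "norm v \<le> R" and w: "norm w \<le> R" and "R < 1"
    and "norm (v - w) \<le> \<Delta>"
  shows "norm (deriv (\<lambda>x. f x s) w * (w + 2 * v\<^sup>2 * u / (1 - v * u)) +
      (- w * deriv (\<lambda>x. f x s) w * ((e + w) / (e - w)))) \<le> 12 * \<Delta> / (1 - R) ^ 3"
proof -
  have "e * u = 1"
    using exp_minus_inverse[of "\<i> * of_real a * of_real s"]
    by (simp add: e_def u_def inv_driving_point_def mult.assoc)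
  moreover have "1 - x * u \<noteq> 0" if "norm x \<le> R" for x
  proof
    assume "1 - x * u = 0"
    then have "x * u = 1" by simp
    then have "norm (x * u) = 1" by simp
    with that \<open>R < 1\<close> show False by (simp add: u_def norm_mult)
  qed
  moreover have "e - w \<noteq> 0"
    using w \<open>R < 1\<close> norm_exp_i_times[of "a * s"] by (auto simp: e_def)
  ultimately have "deriv (\<lambda>x. f x s) w * (w + 2 * v\<^sup>2 * u / (1 - v * u)) +
      (- w * deriv (\<lambda>x. f x s) w * ((e + w) / (e - w))) =
      2 * u * deriv (\<lambda>x. f x s) w * (v - w) * (v + w - v * w * u) / ((1 - v * u) * (1 - w * u))"
    using v w by (intro char_defect_eq) auto
  also have "norm \<dots> \<le> 6 * (2 / (1 - R)) * \<Delta> / (1 - R)\<^sup>2"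
    using assms(5-) loewner_sol_norm_deriv_le[OF sol w \<open>R < 1\<close> \<open>s \<ge> 0\<close>]
    by (intro norm_char_defect_le) (auto simp: u_def)
  also have "\<dots> = 12 * \<Delta> / (1 - R) ^ 3" by (simp add: power2_eq_square power3_eq_cube)
  finally show ?thesis .
qed

lemma norm_char_approx_le:
  assumes "norm z \<le> r" "r < 1" "s \<le> t" "a > 0" "2 * (pi - ln (1 - r)) / a \<le> (1 - r) / 2"
  shows "norm (char_approx a z t (of_real s)) \<le> (1 + r) / 2"
proof -
  define v where "v = radial_flow z t (of_real s)"
  define w where "w = char_approx a z t (of_real s)"
  have "norm w \<le> norm v + norm (w - v)"
    using norm_triangle_ineq2[of w v] by linarith
  also have "\<dots> \<le> r + (1 - r) / 2"
    using norm_radial_flow_le[OF assms(1,3)] norm_char_approx_sub_le[OF assms(1-4)] assms(5)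
    unfolding v_def w_def by (rule add_mono[OF _ order_trans])
  finally show ?thesis by (simp add: w_def field_simps)
qed

lemma norm_diff_le_of_vector_derivative_le:
  fixes \<phi> :: "real \<Rightarrow> 'a::real_normed_vector"
  assumes "a \<le> b"
    and "\<And>s. s \<in> {a..b} \<Longrightarrow> (\<phi> has_vector_derivative \<phi>' s) (at s within {a..b})"
    and "\<And>s. s \<in> {a..b} \<Longrightarrow> norm (\<phi>' s) \<le> M"
  shows "norm (\<phi> b - \<phi> a) \<le> M * (b - a)"
proof -
  have "norm (\<phi> b - \<phi> a) \<le> M * norm (b - a)"
  proof (rule differentiable_bound[of "{a..b}" \<phi> "\<lambda>s h. h *\<^sub>R \<phi>' s"])
    show "(\<phi> has_derivative (\<lambda>h. h *\<^sub>R \<phi>' s)) (at s within {a..b})" if "s \<in> {a..b}" for s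
      using assms(2)[OF that] by (simp add: has_vector_derivative_def)
    show "onorm (\<lambda>h. h *\<^sub>R \<phi>' s) \<le> M" if "s \<in> {a..b}" for s
      using assms(3)[OF that] by (simp add: onorm_scaleR_left[OF bounded_linear_ident] onorm_id)
  qed (use assms(1) in auto)
  then show ?thesis using assms(1) by simp
qed

lemma loewner_sol_along_char_approx:
  assumes sol: "loewner_sol a f" and z: "norm z \<le> r" and "r < 1" "t \<ge> 0" "a > 0"
    and small: "2 * (pi - ln (1 - r)) / a \<le> (1 - r) / 2"
  shows "norm (f (char_approx a z t (of_real t)) t - char_approx a z t 0)
    \<le> 192 * (pi - ln (1 - r)) / (a * (1 - r) ^ 3) * t"
proof -
  define W where "W = (\<lambda>s. char_approx a z t (of_real s))"
  define V where "V s = radial_flow z t (of_real s)" for s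
  define u where "u s = inv_driving_point a (of_real s)" for s
  define R where "R = (1 + r) / 2"
  define \<Delta> where "\<Delta> = 2 * (pi - ln (1 - r)) / a"
  have V: "norm (V s) \<le> r" if "s \<le> t" for s
    using norm_radial_flow_le[OF z that] by (simp add: V_def)
  have W: "norm (W s) \<le> R" if "s \<le> t" for s
    using norm_char_approx_le[OF z \<open>r < 1\<close> that \<open>a > 0\<close> small] by (simp add: W_def R_def)
  have "R < 1" "r \<le> R" using \<open>r < 1\<close> by (auto simp: R_def)
  have W_ball: "W s \<in> ball 0 1" if "s \<le> t" for s using W[OF that] \<open>R < 1\<close> by simp
  have W_deriv: "(W has_vector_derivative W s + 2 * (V s)\<^sup>2 * u s / (1 - V s * u s)) (at s within {0..t})"
    if "s \<le> t" for s
  proof -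
    have Vu: "norm (V s * u s) < 1" using V[OF that] \<open>r < 1\<close> by (simp add: u_def norm_mult)
    show ?thesis unfolding W_def V_def u_def
      by (rule has_vector_derivative_real_field[OF char_approx_has_field_derivative[OF Vu[unfolded V_def u_def]]])
  qed
  define \<phi>' where "\<phi>' s = deriv (\<lambda>x. f x s) (W s) * (W s + 2 * (V s)\<^sup>2 * u s / (1 - V s * u s)) +
      (- W s * deriv (\<lambda>x. f x s) (W s) *
        ((exp (\<i> * of_real (a * s)) + W s) / (exp (\<i> * of_real (a * s)) - W s)))" for s
  have "norm (f (W t) t - f (W 0) 0) \<le> 12 * \<Delta> / (1 - R) ^ 3 * (t - 0)"
  proof (rule norm_diff_le_of_vector_derivative_le[OF \<open>t \<ge> 0\<close>])
    fix s assume s: "s \<in> {0..t}"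
    show "((\<lambda>s. f (W s) s) has_vector_derivative \<phi>' s) (at s within {0..t})"
      unfolding \<phi>'_def
      by (rule has_vector_derivative_holomorphic_param_comp[OF open_ball convex_ball
            loewner_sol_holomorphic[OF sol] loewner_sol_deriv_continuous[OF sol]
            loewner_sol_has_vector_derivative[OF sol] W_deriv])
        (use s W_ball in auto)
    have "norm (V s - W s) \<le> \<Delta>"
      using norm_char_approx_sub_le[OF z \<open>r < 1\<close> _ \<open>a > 0\<close>, of s] s
      by (simp add: V_def W_def \<Delta>_def norm_minus_commute)
    then show "norm (\<phi>' s) \<le> 12 * \<Delta> / (1 - R) ^ 3"
      unfolding \<phi>'_def u_def using s \<open>R < 1\<close> V[of s] \<open>r \<le> R\<close> W[of s]
      by (intro loewner_sol_char_defect_le[OF sol]) auto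
  qed
  moreover have "f (W 0) 0 = W 0" using loewner_sol_initial[OF sol W_ball] \<open>t \<ge> 0\<close> by simp
  moreover have "12 * \<Delta> / (1 - R) ^ 3 = 192 * (pi - ln (1 - r)) / (a * (1 - r) ^ 3)"
    using \<open>r < 1\<close> by (simp add: \<Delta>_def R_def field_simps)
  ultimately show ?thesis by (simp add: W_def)
qed

lemma loewner_sol_approx_error:
  assumes sol: "loewner_sol a f" and z: "norm z \<le> r" and "r < 1" "t \<ge> 0" "a > 0"
    and small: "2 * (pi - ln (1 - r)) / a \<le> (1 - r) / 2"
  shows "norm (f z t - z * exp (- of_real t))
    \<le> (4 / (1 - r) + 1 + 96 * t / (1 - r) ^ 3) * (2 * (pi - ln (1 - r)) / a)"
proof -
  define W where "W = char_approx a z t"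
  define \<Delta> where "\<Delta> = 2 * (pi - ln (1 - r)) / a"
  have W_t: "norm (W (of_real t) - z) \<le> \<Delta>" and W_0: "norm (W 0 - z * exp (- of_real t)) \<le> \<Delta>"
    using norm_char_approx_sub_le[OF z \<open>r < 1\<close> _ \<open>a > 0\<close>, of t t] \<open>t \<ge> 0\<close>
      norm_char_approx_sub_le[OF z \<open>r < 1\<close> \<open>t \<ge> 0\<close> \<open>a > 0\<close>]
    by (simp_all add: W_def \<Delta>_def radial_flow_def)
  have "norm (f z t - f (W (of_real t)) t) \<le> 4 / (1 - r) * norm (z - W (of_real t))"
  proof (rule field_differentiable_bound[of "cball 0 ((1 + r) / 2)"])
    fix x :: complex assume x: "x \<in> cball 0 ((1 + r) / 2)"
    then have "x \<in> ball 0 1" using \<open>r < 1\<close> by simp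
    then show "((\<lambda>w. f w t) has_field_derivative deriv (\<lambda>w. f w t) x) (at x within cball 0 ((1 + r) / 2))"
      using loewner_sol_holomorphic[OF sol \<open>t \<ge> 0\<close>]
      by (intro DERIV_deriv_iff_field_differentiable[THEN iffD2, THEN has_field_derivative_at_within]
          holomorphic_on_imp_differentiable_at[of _ "ball 0 1"]) auto
    show "norm (deriv (\<lambda>w. f w t) x) \<le> 4 / (1 - r)"
      using loewner_sol_norm_deriv_le[OF sol _ _ \<open>t \<ge> 0\<close>, of x "(1 + r) / 2"] x \<open>r < 1\<close>
      by (simp add: field_simps)
  qed (use z \<open>r < 1\<close> norm_char_approx_le[OF z \<open>r < 1\<close> order_refl \<open>a > 0\<close> small] in \<open>auto simp: W_def\<close>)
  also have "\<dots> \<le> 4 / (1 - r) * \<Delta>"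
    using W_t \<open>r < 1\<close> by (intro mult_left_mono) (auto simp: norm_minus_commute)
  finally have lip: "norm (f z t - f (W (of_real t)) t) \<le> 4 / (1 - r) * \<Delta>" .
  have "norm (f z t - z * exp (- of_real t)) = norm ((f z t - f (W (of_real t)) t) +
      (f (W (of_real t)) t - W 0) + (W 0 - z * exp (- of_real t)))"
    by simp
  also have "\<dots> \<le> norm (f z t - f (W (of_real t)) t) +
      norm (f (W (of_real t)) t - W 0) + norm (W 0 - z * exp (- of_real t))"
    by (intro norm_triangle_le add_right_mono norm_triangle_ineq)
  also have "\<dots> \<le> 4 / (1 - r) * \<Delta> + 192 * (pi - ln (1 - r)) / (a * (1 - r) ^ 3) * t + \<Delta>"
    using lip loewner_sol_along_char_approx[OF assms] W_0 by (intro add_mono) (auto simp: W_def)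
  also have "\<dots> = (4 / (1 - r) + 1 + 96 * t / (1 - r) ^ 3) * \<Delta>"
    using \<open>r < 1\<close> \<open>a > 0\<close> by (simp add: \<Delta>_def field_simps)
  finally show ?thesis by (simp add: \<Delta>_def)
qed

section \<open>Convergence\<close>

lemma compact_subset_ball_obtains_cball:
  fixes K :: "'a::real_normed_vector set"
  assumes "compact K" "K \<subseteq> ball 0 R" "R > 0"
  obtains r where "0 \<le> r" "r < R" "K \<subseteq> cball 0 r"
proof (cases "K = {}")
  case False
  obtain k where "k \<in> K" and "\<And>y. y \<in> K \<Longrightarrow> norm y \<le> norm k"
    using continuous_attains_sup[OF assms(1) False continuous_on_norm_id] by blast
  then show thesis using assms(2) by (intro that[of "norm k"]) auto
qed (use assms(3) in \<open>auto intro: that[of 0]\<close>)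

lemma uniform_limit_at_top_if_dist_le_div:
  fixes F :: "real \<Rightarrow> 'a \<Rightarrow> 'b::metric_space"
  assumes "\<forall>\<^sub>F a in at_top. \<forall>x\<in>K. dist (F a x) (G x) \<le> C / a"
  shows "uniform_limit K F G at_top"
  unfolding uniform_limit_iff
proof (intro allI impI)
  fix e :: real assume "e > 0"
  have "\<forall>\<^sub>F a in at_top. C / a < e"
    using eventually_gt_at_top[of "max 0 (C / e)"]
  proof eventually_elim
    case (elim a)
    then have "C < e * a" using \<open>e > 0\<close> by (auto simp: pos_divide_less_eq mult.commute)
    then show ?case using elim by (simp add: pos_divide_less_eq mult.commute)
  qed
  with assms show "\<forall>\<^sub>F a in at_top. \<forall>x\<in>K. dist (F a x) (G x) < e"
    by eventually_elim (meson order_le_less_trans)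
qed

theorem proposition3p4:
  fixes f :: "real \<Rightarrow> complex \<Rightarrow> real \<Rightarrow> complex"
  assumes "\<And>a. loewner_sol a (f a)"
  shows "\<forall>t\<ge>0. \<forall>K. compact K \<and> K \<subseteq> ball 0 1 \<longrightarrow>
           uniform_limit K (\<lambda>a z. f a z t) (\<lambda>z. z * exp (- of_real t)) at_top"
proof (intro allI impI)
  fix t :: real and K :: "complex set"
  assume "t \<ge> 0" and K: "compact K \<and> K \<subseteq> ball 0 1"
  then obtain r where r: "0 \<le> r" "r < 1" and "K \<subseteq> cball 0 r"
    using compact_subset_ball_obtains_cball[of K 1] by auto
  define \<Lambda> where "\<Lambda> = pi - ln (1 - r)"
  have "\<forall>\<^sub>F a in at_top. a > 0 \<and> 2 * \<Lambda> / a \<le> (1 - r) / 2"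
    using eventually_gt_at_top[of "max 0 (4 * \<Lambda> / (1 - r))"]
    by eventually_elim (use r in \<open>auto simp: pos_divide_le_eq field_simps\<close>)
  then have "\<forall>\<^sub>F a in at_top. \<forall>z\<in>K. dist (f a z t) (z * exp (- of_real t))
      \<le> (4 / (1 - r) + 1 + 96 * t / (1 - r) ^ 3) * (2 * \<Lambda>) / a"
    by eventually_elim (use loewner_sol_approx_error[OF assms _ r(2) \<open>t \<ge> 0\<close>] \<open>K \<subseteq> cball 0 r\<close>
        in \<open>auto simp: dist_norm \<Lambda>_def\<close>)
  then show "uniform_limit K (\<lambda>a z. f a z t) (\<lambda>z. z * exp (- of_real t)) at_top"
    by (rule uniform_limit_at_top_if_dist_le_div)
qed

end
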